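(* Let $a<b$ be real numbers and let $0<\alpha,\beta\leq 1$ with $1<\alpha+\beta\leq 2$. If $\lambda\in\mathbb{R}$ is an eigenvalue of the fractional boundary value problem $${}^{C}D_{b^{-}}^{\alpha}D_{a^{+}}^{\beta}u(t)=\lambda u(t),\quad a<t<b,\qquad u(a)=0,\quad D_{a^{+}}^{\beta}u(b)=0,$$ (that is, this problem has a nontrivial continuous solution $u$ on $[a,b]$), then $$|\lambda|\geq \frac{(\alpha+\beta-1)\Gamma(\alpha)\Gamma(\beta)}{(b-a)^{\alpha+\beta}}.$$
   Context: For $p>0$, the left and right Riemann--Liouville fractional integrals of a function $g$ on $[a,b]$ are $I_{a^{+}}^{p}g(t)=\frac{1}{\Gamma(p)}\int_a^t (t-s)^{p-1}g(s)\,ds$ and $I_{b^{-}}^{p}g(t)=\frac{1}{\Gamma(p)}\int_t^b (s-t)^{p-1}g(s)\,ds$. For $0<p<1$, the left Riemann--Liouville fractional derivative is $D_{a^{+}}^{p}g(t)=\frac{d}{dt}\big(I_{a^{+}}^{1-p}g\big)(t)$ and the right Caputo fractional derivative is ${}^{C}D_{b^{-}}^{p}g(t)=-I_{b^{-}}^{1-p}g'(t)$; for $p=1$ these are $D_{a^{+}}^{1}g=g'$ and ${}^{C}D_{b^{-}}^{1}g=-g'$. $\Gamma$ denotes the Gamma function. *)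

theory Defs
  imports "HOL-Analysis.Analysis"
begin

definition RL_int_left :: "real \<Rightarrow> real \<Rightarrow> (real \<Rightarrow> real) \<Rightarrow> real \<Rightarrow> real" where
  "RL_int_left p a g t = integral {a..t} (\<lambda>s. (t - s) powr (p - 1) * g s) / Gamma p"

definition RL_int_right :: "real \<Rightarrow> real \<Rightarrow> (real \<Rightarrow> real) \<Rightarrow> real \<Rightarrow> real" where
  "RL_int_right p b g t = integral {t..b} (\<lambda>s. (s - t) powr (p - 1) * g s) / Gamma p"

text \<open>The function whose ordinary derivative is the left RL derivative of order p
  (0 < p \<le> 1): I^{1-p}_{a+} g for p < 1, and g itself for p = 1.\<close>
definition RL_pre_left :: "real \<Rightarrow> real \<Rightarrow> (real \<Rightarrow> real) \<Rightarrow> real \<Rightarrow> real" where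
  "RL_pre_left p a g = (if p = 1 then g else RL_int_left (1 - p) a g)"

definition has_RL_deriv_left ::
  "real \<Rightarrow> real \<Rightarrow> (real \<Rightarrow> real) \<Rightarrow> (real \<Rightarrow> real) \<Rightarrow> real set \<Rightarrow> bool" where
  "has_RL_deriv_left p a g w S \<longleftrightarrow>
     (\<forall>t\<in>S. (RL_pre_left p a g has_real_derivative w t) (at t within S))"

text \<open>Right Caputo derivative of order p (0 < p \<le> 1) of a function whose ordinary
  derivative is g': -I^{1-p}_{b-} g' for p < 1, and -g' for p = 1.\<close>
definition caputo_right :: "real \<Rightarrow> real \<Rightarrow> (real \<Rightarrow> real) \<Rightarrow> real \<Rightarrow> real" where
  "caputo_right p b g' t = (if p = 1 then - g' t else - RL_int_right (1 - p) b g' t)"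

text \<open>Here w = D^beta_{a+} u
  (defined on all of [a,b], continuous there), w' is the ordinary derivative of w on
  (a,b), and the Caputo derivative of w is required to exist (integrability of the
  weakly singular integrand).\<close>
definition frac_eigenvalue :: "real \<Rightarrow> real \<Rightarrow> real \<Rightarrow> real \<Rightarrow> real \<Rightarrow> bool" where
  "frac_eigenvalue \<alpha> \<beta> a b lam \<longleftrightarrow>
    (\<exists>u w w'.
       continuous_on {a..b} u \<and> (\<exists>t\<in>{a..b}. u t \<noteq> 0) \<and>
       has_RL_deriv_left \<beta> a u w {a..b} \<and> continuous_on {a..b} w \<and>
       (\<forall>t\<in>{a<..<b}. (w has_real_derivative w' t) (at t)) \<and>
       (\<alpha> < 1 \<longrightarrow> (\<forall>t\<in>{a<..<b}. (\<lambda>s. (s - t) powr (- \<alpha>) * w' s) integrable_on {t..b})) \<and>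
       (\<forall>t\<in>{a<..<b}. caputo_right \<alpha> b w' t = lam * u t) \<and>
       u a = 0 \<and> w b = 0)"

end

theory Submission
  imports Defs
begin

text \<open>Let \<open>u\<close> be an eigenfunction, \<open>w = D\<^sup>\<beta>\<^sub>a\<^sub>+ u\<close> and \<open>m = \<bar>\<lambda>\<bar> max \<bar>u\<bar>\<close>.
  At an interior minimum \<open>t\<^sub>0\<close> of a function \<open>z\<close> the weighted integral
  \<open>\<integral>\<^sub>t\<^sub>0\<^sup>b (s - t\<^sub>0)\<^sup>-\<^sup>\<alpha> z'(s) ds\<close> is positive, which yields a comparison principle for the right
  Caputo derivative; comparing \<open>w\<close> with the solution of \<open>\<^sup>CD\<^sup>\<alpha>\<^sub>b\<^sub>- y = m\<close>, \<open>y(b) = 0\<close>, gives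
  \<open>\<bar>w\<bar> \<le> m (b - a)\<^sup>\<alpha> / \<Gamma>(\<alpha> + 1)\<close>.
  Dually, if the Riemann--Liouville integral \<open>I\<^sup>1\<^sup>-\<^sup>\<beta>\<^sub>a\<^sub>+ Z\<close> of a continuous \<open>Z\<close> is nonnegative and
  nondecreasing, then applying \<open>I\<^sup>\<beta>\<^sub>a\<^sub>+\<close> shows that \<open>\<integral>\<^sub>a\<^sup>t Z\<close> is nondecreasing, so \<open>Z \<ge> 0\<close>;
  comparing \<open>u\<close> with \<open>(t - a)\<^sup>\<beta>\<close> this gives \<open>max \<bar>u\<bar> \<le> max \<bar>w\<bar> (b - a)\<^sup>\<beta> / \<Gamma>(\<beta> + 1)\<close>.
  Together \<open>\<Gamma>(\<alpha> + 1) \<Gamma>(\<beta> + 1) \<le> \<bar>\<lambda>\<bar> (b - a)\<^sup>\<alpha>\<^sup>+\<^sup>\<beta>\<close>, and \<open>\<alpha>\<beta> \<ge> \<alpha> + \<beta> - 1\<close>.\<close>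

section \<open>Integrals against power kernels\<close>

lemma has_integral_Beta_interval:
  fixes c d p q :: real
  assumes p: "0 < p" and q: "0 < q" and cd: "c < d"
  shows "((\<lambda>s. (s - c) powr (p - 1) * (d - s) powr (q - 1)) has_integral
           Beta p q * (d - c) powr (p + q - 1)) {c..d}"
proof -
  have B: "((\<lambda>x. x powr (p - 1) * (1 - x) powr (q - 1)) has_integral Beta p q) (cbox 0 1)"
    using has_integral_Beta_real[OF p q] by simp
  have img: "(\<lambda>s. (d - c) * s + c) ` {0..1} = {c..d}"
    using cd by (simp add: image_affinity_atLeastAtMost)
  have "((\<lambda>s. ((s - c) / (d - c)) powr (p - 1) * ((d - s) / (d - c)) powr (q - 1))
        has_integral (d - c) * Beta p q) {c..d}"
  proof -
    have m: "1 / (d - c) \<noteq> 0" using cd by simp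
    have aff: "(\<lambda>x. 1 / (1 / (d - c)) * x + - (1 / (1 / (d - c)) * (- c / (d - c)))) = (\<lambda>s. (d - c) * s + c)"
    proof -
      have "1 / (1 / (d - c)) = d - c" "(d - c) * (- c / (d - c)) = - c" using cd by simp_all
      then show ?thesis by simp
    qed
    from has_integral_affinity[OF B m, of "- c / (d - c)"] cd
    have "((\<lambda>s. (1 / (d - c) * s + - c / (d - c)) powr (p - 1) * (1 - (1 / (d - c) * s + - c / (d - c))) powr (q - 1))
        has_integral (d - c) * Beta p q) ((\<lambda>s. (d - c) * s + c) ` cbox 0 1)"
      unfolding aff by simp
    moreover have "1 / (d - c) * s + - c / (d - c) = (s - c) / (d - c)" for s
      by (simp add: diff_divide_distrib)
    moreover have "1 - (s - c) / (d - c) = (d - s) / (d - c)" for s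
      using cd by (simp add: diff_divide_eq_iff)
    ultimately show ?thesis by (simp add: img)
  qed
  then have "((\<lambda>s. (d - c) powr (p + q - 2) *
        (((s - c) / (d - c)) powr (p - 1) * ((d - s) / (d - c)) powr (q - 1)))
        has_integral (d - c) powr (p + q - 2) * ((d - c) * Beta p q)) {c..d}"
    by (rule has_integral_mult_right)
  moreover have "(d - c) powr (p + q - 2) * ((d - c) * Beta p q) = Beta p q * (d - c) powr (p + q - 1)"
    using cd powr_add[of "d - c" "p + q - 2" 1] by simp
  ultimately have "((\<lambda>s. (d - c) powr (p + q - 2) *
        (((s - c) / (d - c)) powr (p - 1) * ((d - s) / (d - c)) powr (q - 1)))
        has_integral Beta p q * (d - c) powr (p + q - 1)) {c..d}"
    by simp
  moreover have "(d - c) powr (p + q - 2) * (((s - c) / (d - c)) powr (p - 1) * ((d - s) / (d - c)) powr (q - 1))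
      = (s - c) powr (p - 1) * (d - s) powr (q - 1)" if "s \<in> {c..d}" for s
  proof -
    have "((s - c) / (d - c)) powr (p - 1) = (s - c) powr (p - 1) / (d - c) powr (p - 1)"
      and "((d - s) / (d - c)) powr (q - 1) = (d - s) powr (q - 1) / (d - c) powr (q - 1)"
      using that cd by (simp_all add: powr_divide)
    moreover have "(d - c) powr (p + q - 2) = (d - c) powr (p - 1) * (d - c) powr (q - 1)"
      using cd by (simp add: powr_add[symmetric])
    ultimately show ?thesis using cd by simp
  qed
  ultimately show ?thesis
    by (metis (no_types, lifting) has_integral_cong)
qed

lemma has_integral_powr_sub_lower:
  fixes c d p :: real
  assumes "c \<le> d" and "0 < p"
  shows "((\<lambda>s. (s - c) powr (p - 1)) has_integral (d - c) powr p / p) {c..d}"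
proof -
  have "((\<lambda>s. (s - c) powr (p - 1)) has_integral (d - c) powr p / p - (c - c) powr p / p) {c..d}"
  proof (rule fundamental_theorem_of_calculus_interior)
    show "continuous_on {c..d} (\<lambda>s. (s - c) powr p / p)"
      using assms by (intro continuous_intros continuous_on_powr') auto
    fix s assume "s \<in> {c<..<d}"
    then have "((\<lambda>s. (s - c) powr p / p) has_real_derivative p * (s - c) powr (p - 1) * 1 / p) (at s)"
      by (auto intro!: derivative_eq_intros)
    then show "((\<lambda>s. (s - c) powr p / p) has_vector_derivative (s - c) powr (p - 1)) (at s)"
      using assms by (simp add: has_real_derivative_iff_has_vector_derivative)
  qed (use assms in auto)
  then show ?thesis by simp
qed

lemma has_integral_powr_sub_upper:
  fixes c d p :: real
  assumes "c \<le> d" and "0 < p"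
  shows "((\<lambda>s. (d - s) powr (p - 1)) has_integral (d - c) powr p / p) {c..d}"
proof -
  have "((\<lambda>s. (d - s) powr (p - 1)) has_integral - ((d - d) powr p / p) - - ((d - c) powr p / p)) {c..d}"
  proof (rule fundamental_theorem_of_calculus_interior)
    show "continuous_on {c..d} (\<lambda>s. - ((d - s) powr p / p))"
      using assms by (intro continuous_intros continuous_on_powr') auto
    fix s assume "s \<in> {c<..<d}"
    then have "((\<lambda>s. - ((d - s) powr p / p)) has_real_derivative - (p * (d - s) powr (p - 1) * (0 - 1) / p)) (at s)"
      by (auto intro!: derivative_eq_intros)
    then show "((\<lambda>s. - ((d - s) powr p / p)) has_vector_derivative (d - s) powr (p - 1)) (at s)"
      using assms by (simp add: has_real_derivative_iff_has_vector_derivative)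
  qed (use assms in auto)
  then show ?thesis by simp
qed

lemma has_integral_RL_kernel_powr:
  fixes a r q x :: real
  assumes "a \<le> r" and "0 < q" and "-1 < x"
  shows "((\<lambda>s. (r - s) powr (q - 1) * (s - a) powr x) has_integral
           Beta (x + 1) q * (r - a) powr (x + q)) {a..r}"
proof (cases "a = r")
  case False
  then have "((\<lambda>s. (s - a) powr (x + 1 - 1) * (r - s) powr (q - 1)) has_integral
      Beta (x + 1) q * (r - a) powr (x + 1 + q - 1)) {a..r}"
    using assms by (intro has_integral_Beta_interval) auto
  then show ?thesis by (simp add: mult.commute)
qed (simp add: has_integral_refl)

lemma integrable_continuous_mult_nonneg:
  fixes h g :: "real \<Rightarrow> real"
  assumes h: "continuous_on {c..d} h" and g: "g integrable_on {c..d}"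
    and g0: "\<And>x. x \<in> {c..d} \<Longrightarrow> 0 \<le> g x"
  shows "(\<lambda>x. h x * g x) integrable_on {c..d}"
proof -
  have "g absolutely_integrable_on {c..d}"
    using g g0 absolutely_integrable_on_iff_nonneg by blast
  moreover have "h \<in> borel_measurable (lebesgue_on {c..d})"
    by (rule continuous_imp_measurable_on_sets_lebesgue[OF h]) auto
  moreover have "bounded (h ` {c..d})"
    using compact_continuous_image[OF h] compact_imp_bounded by blast
  ultimately have "(\<lambda>x. h x * g x) absolutely_integrable_on {c..d}"
    by (intro absolutely_integrable_bounded_measurable_product_real) auto
  then show ?thesis using absolutely_integrable_on_def by blast
qed

lemma abs_integral_continuous_mult_nonneg_le:
  fixes h g :: "real \<Rightarrow> real"
  assumes h: "continuous_on {c..d} h" and g: "g integrable_on {c..d}"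
    and g0: "\<And>x. x \<in> {c..d} \<Longrightarrow> 0 \<le> g x"
    and hC: "\<And>x. x \<in> {c..d} \<Longrightarrow> \<bar>h x\<bar> \<le> C"
  shows "\<bar>integral {c..d} (\<lambda>x. h x * g x)\<bar> \<le> C * integral {c..d} g"
proof -
  have hg: "(\<lambda>x. h x * g x) integrable_on {c..d}"
    by (rule integrable_continuous_mult_nonneg[OF h g g0])
  have Cg: "(\<lambda>x. C * g x) integrable_on {c..d}" "(\<lambda>x. - C * g x) integrable_on {c..d}"
    using integrable_on_mult_right[OF g, of C] integrable_on_mult_right[OF g, of "- C"] by auto
  have "- C * g x \<le> h x * g x \<and> h x * g x \<le> C * g x" if "x \<in> {c..d}" for x
    using hC[OF that] g0[OF that] mult_right_mono[of "- C" "h x" "g x"] mult_right_mono[of "h x" C "g x"]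
    by (auto simp: abs_le_iff)
  then have "integral {c..d} (\<lambda>x. - C * g x) \<le> integral {c..d} (\<lambda>x. h x * g x)"
    and "integral {c..d} (\<lambda>x. h x * g x) \<le> integral {c..d} (\<lambda>x. C * g x)"
    by (intro integral_le hg Cg; simp)+
  then show ?thesis by (simp add: abs_le_iff)
qed

section \<open>A comparison principle for the right Caputo derivative\<close>

text \<open>Integrate the derivative of \<open>(s - t0) powr (- \<alpha>) * (z s - z t0)\<close>; the part coming from the
  power is \<open>\<le> 0\<close> since \<open>z s \<ge> z t0\<close>.\<close>
lemma weighted_derivative_integral_ge:
  fixes z z' :: "real \<Rightarrow> real" and t0 x b \<alpha> :: real
  assumes x: "t0 < x" "x \<le> b" and a0: "0 < \<alpha>"
    and cont: "continuous_on {x..b} z"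
    and der: "\<And>s. s \<in> {x<..<b} \<Longrightarrow> (z has_real_derivative z' s) (at s)"
    and mn: "\<And>s. s \<in> {x..b} \<Longrightarrow> z t0 \<le> z s"
    and int: "(\<lambda>s. (s - t0) powr (- \<alpha>) * z' s) integrable_on {x..b}"
  shows "(b - t0) powr (- \<alpha>) * (z b - z t0) - (x - t0) powr (- \<alpha>) * (z x - z t0)
           \<le> integral {x..b} (\<lambda>s. (s - t0) powr (- \<alpha>) * z' s)"
proof -
  define f where "f = (\<lambda>s. (s - t0) powr (- \<alpha>) * z' s)"
  define \<Phi> where "\<Phi> = (\<lambda>s. (s - t0) powr (- \<alpha>) * (z s - z t0))"
  define \<Phi>' where "\<Phi>' = (\<lambda>s. - \<alpha> * (s - t0) powr (- \<alpha> - 1) * (z s - z t0) + f s)"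
  have "(\<Phi>' has_integral \<Phi> b - \<Phi> x) {x..b}"
  proof (rule fundamental_theorem_of_calculus_interior)
    show "continuous_on {x..b} \<Phi>"
      unfolding \<Phi>_def using x by (intro continuous_intros cont) auto
    fix s assume s: "s \<in> {x<..<b}"
    have "(\<Phi> has_real_derivative
        - \<alpha> * (s - t0) powr (- \<alpha> - 1) * 1 * (z s - z t0) + (s - t0) powr (- \<alpha>) * z' s) (at s)"
      unfolding \<Phi>_def using s x by (auto intro!: derivative_eq_intros der)
    then show "(\<Phi> has_vector_derivative \<Phi>' s) (at s)"
      by (simp add: \<Phi>'_def f_def has_real_derivative_iff_has_vector_derivative)
  qed (use x in auto)
  moreover have "f integrable_on {x..b}" using int by (simp add: f_def)
  moreover have "\<Phi>' s \<le> f s" if "s \<in> {x..b}" for s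
  proof -
    have "0 \<le> (s - t0) powr (- \<alpha> - 1) * (z s - z t0)" using mn[OF that] by simp
    then show ?thesis using a0 by (simp add: \<Phi>'_def mult.assoc)
  qed
  ultimately have "\<Phi> b - \<Phi> x \<le> integral {x..b} f"
    using has_integral_le[of \<Phi>' _ "{x..b}" f] by (metis integrable_integral)
  then show ?thesis by (simp add: \<Phi>_def f_def)
qed

text \<open>The boundary term \<open>(x - t0) powr (- \<alpha>) * (z x - z t0)\<close> of the previous lemma vanishes as
  \<open>x \<rightarrow> t0\<close> because \<open>z\<close> is differentiable at \<open>t0\<close> and \<open>\<alpha> < 1\<close>.\<close>
lemma weighted_derivative_integral_ge_at_minimum:
  fixes z z' :: "real \<Rightarrow> real" and t0 b \<alpha> D :: real
  assumes tb: "t0 < b" and a0: "0 < \<alpha>" and a1: "\<alpha> < 1"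
    and cont: "continuous_on {t0..b} z"
    and der: "\<And>s. s \<in> {t0<..<b} \<Longrightarrow> (z has_real_derivative z' s) (at s)"
    and der0: "(z has_real_derivative D) (at t0)"
    and mn: "\<And>s. s \<in> {t0..b} \<Longrightarrow> z t0 \<le> z s"
    and int: "(\<lambda>s. (s - t0) powr (- \<alpha>) * z' s) integrable_on {t0..b}"
  shows "(b - t0) powr (- \<alpha>) * (z b - z t0) \<le> integral {t0..b} (\<lambda>s. (s - t0) powr (- \<alpha>) * z' s)"
proof -
  define f where "f = (\<lambda>s. (s - t0) powr (- \<alpha>) * z' s)"
  define \<Phi> where "\<Phi> = (\<lambda>s. (s - t0) powr (- \<alpha>) * (z s - z t0))"
  have lim_int: "((\<lambda>x. integral {x..b} f) \<longlongrightarrow> integral {t0..b} f) (at_right t0)"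
  proof -
    have "continuous_on {t0..b} (\<lambda>x. integral {x..b} f)"
      using int unfolding f_def by (rule indefinite_integral_continuous_1')
    then have "((\<lambda>x. integral {x..b} f) \<longlongrightarrow> integral {t0..b} f) (at t0 within {t0..b})"
      using tb by (auto simp: continuous_on_def)
    then show ?thesis using tb by (simp add: at_within_Icc_at_right)
  qed
  have lim_\<Phi>: "(\<Phi> \<longlongrightarrow> 0) (at_right t0)"
  proof -
    have "((\<lambda>y. (z y - z t0) / (y - t0)) \<longlongrightarrow> D) (at_right t0)"
      using der0 has_field_derivative_at_within has_field_derivative_iff by blast
    moreover have "((\<lambda>y. (y - t0) powr (1 - \<alpha>)) \<longlongrightarrow> 0) (at_right t0)"
      using a1 by (intro tendsto_zero_powrI tendsto_eq_intros)
        (auto simp: eventually_at_right_less eventually_at_filter)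
    ultimately have "((\<lambda>y. (y - t0) powr (1 - \<alpha>) * ((z y - z t0) / (y - t0))) \<longlongrightarrow> 0 * D) (at_right t0)"
      by (intro tendsto_mult)
    moreover have "\<forall>\<^sub>F y in at_right t0. (y - t0) powr (1 - \<alpha>) * ((z y - z t0) / (y - t0)) = \<Phi> y"
      using eventually_at_right_less[of t0]
    proof eventually_elim
      case (elim y)
      then have "(y - t0) powr (1 - \<alpha>) = (y - t0) powr (- \<alpha>) * (y - t0)"
        by (simp add: powr_diff powr_minus divide_inverse)
      then show ?case using elim by (simp add: \<Phi>_def)
    qed
    ultimately show ?thesis by (simp add: tendsto_cong)
  qed
  have "\<forall>\<^sub>F x in at_right t0. \<Phi> b - \<Phi> x \<le> integral {x..b} f"
  proof -
    have "\<forall>\<^sub>F x in at_right t0. x \<in> {t0<..<b}"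
      using tb by (auto simp: eventually_at_right_field)
    then show ?thesis
    proof eventually_elim
      case (elim x)
      then show ?case
        unfolding \<Phi>_def f_def
        by (intro weighted_derivative_integral_ge[OF _ _ a0] continuous_on_subset[OF cont] der mn
            integrable_subinterval_real[OF int]) auto
    qed
  qed
  then have "\<Phi> b - 0 \<le> integral {t0..b} f"
    by (intro tendsto_le[OF _ lim_int tendsto_diff[OF tendsto_const lim_\<Phi>]]) auto
  then show ?thesis by (simp add: \<Phi>_def f_def)
qed

lemma right_caputo_minimum_principle:
  fixes z z' :: "real \<Rightarrow> real" and a b \<alpha> t :: real
  assumes a0: "0 < \<alpha>" and a1: "\<alpha> < 1"
    and cont: "continuous_on {a<..b} z"
    and der: "\<And>s. s \<in> {a<..<b} \<Longrightarrow> (z has_real_derivative z' s) (at s)"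
    and int: "\<And>t. t \<in> {a<..<b} \<Longrightarrow> (\<lambda>s. (s - t) powr (- \<alpha>) * z' s) integrable_on {t..b}"
    and nonpos: "\<And>t. t \<in> {a<..<b} \<Longrightarrow> integral {t..b} (\<lambda>s. (s - t) powr (- \<alpha>) * z' s) \<le> 0"
    and zb: "0 \<le> z b"
    and near: "\<forall>\<^sub>F s in at_right a. 0 \<le> z s"
    and t: "t \<in> {a<..b}"
  shows "0 \<le> z t"
proof (rule ccontr)
  assume "\<not> 0 \<le> z t"
  then have zt: "z t < 0" by simp
  obtain d where "a < d" and d: "\<And>s. a < s \<Longrightarrow> s < d \<Longrightarrow> 0 \<le> z s"
    using near by (auto simp: eventually_at_right_field)
  define c where "c = (a + min d t) / 2"
  have c: "a < c" "c < t" "0 \<le> z c"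
    using \<open>a < d\<close> t d[of c] by (auto simp: c_def)
  obtain t0 where t0: "t0 \<in> {c..b}" and t0min: "\<And>s. s \<in> {c..b} \<Longrightarrow> z t0 \<le> z s"
  proof -
    have "{c..b} \<noteq> {}" "{c..b} \<subseteq> {a<..b}" using c t by auto
    then show thesis
      using that continuous_attains_inf[OF compact_Icc _ continuous_on_subset[OF cont]] by blast
  qed
  have zt0: "z t0 < 0" using t0min[of t] zt c t by auto
  then have "t0 \<noteq> c" "t0 \<noteq> b" using c zb by auto
  with t0 have t0i: "t0 \<in> {c<..<b}" by auto
  have "(b - t0) powr (- \<alpha>) * (z b - z t0) \<le> integral {t0..b} (\<lambda>s. (s - t0) powr (- \<alpha>) * z' s)"
    using t0i c
    by (intro weighted_derivative_integral_ge_at_minimum[OF _ a0 a1 _ _ der[of t0]]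
        continuous_on_subset[OF cont] der int t0min) auto
  moreover have "0 < (b - t0) powr (- \<alpha>) * (z b - z t0)" using zt0 zb t0i by simp
  moreover have "integral {t0..b} (\<lambda>s. (s - t0) powr (- \<alpha>) * z' s) \<le> 0"
    using nonpos t0i c by auto
  ultimately show False by linarith
qed

lemma has_integral_right_caputo_of_power:
  fixes t b \<alpha> :: real
  assumes "t < b" and "0 < \<alpha>" and "\<alpha> < 1"
  shows "((\<lambda>s. (s - t) powr (- \<alpha>) * (b - s) powr (\<alpha> - 1)) has_integral Gamma (1 - \<alpha>) * Gamma \<alpha>) {t..b}"
  using has_integral_Beta_interval[of "1 - \<alpha>" \<alpha> t b] assms by (simp add: Beta_def)

text \<open>The penalty \<open>\<epsilon> / (s - a)\<close> supplies the behaviour at \<open>a\<close> required by the minimum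
  principle; it disappears as \<open>\<epsilon> \<rightarrow> 0\<close>.\<close>
lemma right_caputo_nonneg:
  fixes v v' :: "real \<Rightarrow> real" and a b \<alpha> t :: real
  assumes a0: "0 < \<alpha>" and a1: "\<alpha> < 1"
    and vc: "continuous_on {a..b} v" and vb: "0 \<le> v b"
    and vd: "\<And>t. t \<in> {a<..<b} \<Longrightarrow> (v has_real_derivative v' t) (at t)"
    and vi: "\<And>t. t \<in> {a<..<b} \<Longrightarrow> (\<lambda>s. (s - t) powr (- \<alpha>) * v' s) integrable_on {t..b}"
    and vneg: "\<And>t. t \<in> {a<..<b} \<Longrightarrow> integral {t..b} (\<lambda>s. (s - t) powr (- \<alpha>) * v' s) \<le> 0"
    and t: "t \<in> {a<..<b}"
  shows "0 \<le> v t"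
proof -
  obtain K where K: "\<And>s. s \<in> {a..b} \<Longrightarrow> - K \<le> v s"
  proof -
    have "bounded (v ` {a..b})"
      by (intro compact_imp_bounded compact_continuous_image vc) simp
    then obtain K where "\<forall>x \<in> v ` {a..b}. \<bar>x\<bar> \<le> K"
      unfolding bounded_real by blast
    then have "s \<in> {a..b} \<Longrightarrow> - K \<le> v s" for s by (force simp: abs_le_iff)
    then show thesis by (rule that)
  qed
  have penalized: "0 \<le> v s + \<epsilon> / (s - a)" if "0 < \<epsilon>" "s \<in> {a<..b}" for \<epsilon> s
  proof -
    define z where "z = (\<lambda>s. v s + \<epsilon> / (s - a))"
    define z' where "z' = (\<lambda>s. v' s - \<epsilon> / (s - a)\<^sup>2)"
    have "0 \<le> z s"
    proof (rule right_caputo_minimum_principle[OF a0 a1, of a b z z'])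
      show "continuous_on {a<..b} z"
        unfolding z_def by (intro continuous_intros continuous_on_subset[OF vc]) auto
      show "(z has_real_derivative z' s) (at s)" if "s \<in> {a<..<b}" for s
        unfolding z_def z'_def using that
        by (auto intro!: derivative_eq_intros vd simp: power2_eq_square)
      fix r assume r: "r \<in> {a<..<b}"
      have "(\<lambda>s. - \<epsilon> / (s - a)\<^sup>2 * (s - r) powr (- \<alpha>)) integrable_on {r..b}"
        using r a1 has_integral_powr_sub_lower[of r b "1 - \<alpha>"]
        by (intro integrable_continuous_mult_nonneg continuous_intros) auto
      then obtain I where I: "((\<lambda>s. (s - r) powr (- \<alpha>) * (- \<epsilon> / (s - a)\<^sup>2)) has_integral I) {r..b}"
        by (auto simp: mult.commute integrable_on_def)
      have "I \<le> 0"
        by (rule has_integral_le[OF I has_integral_0]) (use \<open>0 < \<epsilon>\<close> in \<open>auto intro: mult_nonneg_nonpos\<close>)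
      have "((\<lambda>s. (s - r) powr (- \<alpha>) * v' s + (s - r) powr (- \<alpha>) * (- \<epsilon> / (s - a)\<^sup>2)) has_integral
          integral {r..b} (\<lambda>s. (s - r) powr (- \<alpha>) * v' s) + I) {r..b}"
        by (intro has_integral_add integrable_integral vi[OF r] I)
      then have zi: "((\<lambda>s. (s - r) powr (- \<alpha>) * z' s) has_integral
          integral {r..b} (\<lambda>s. (s - r) powr (- \<alpha>) * v' s) + I) {r..b}"
        by (simp add: z'_def ring_distribs)
      then show "(\<lambda>s. (s - r) powr (- \<alpha>) * z' s) integrable_on {r..b}" by blast
      show "integral {r..b} (\<lambda>s. (s - r) powr (- \<alpha>) * z' s) \<le> 0"
        using vneg[OF r] \<open>I \<le> 0\<close> integral_unique[OF zi] by linarith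
    next
      show "0 \<le> z b" using that vb by (simp add: z_def)
      have K1: "0 < \<bar>K\<bar> + 1" using abs_ge_zero[of K] by linarith
      show "\<forall>\<^sub>F s in at_right a. 0 \<le> z s"
        unfolding eventually_at_right_field
      proof (intro exI conjI allI impI)
        show "a < min b (a + \<epsilon> / (\<bar>K\<bar> + 1))" using that K1 by auto
        fix s assume s: "a < s" "s < min b (a + \<epsilon> / (\<bar>K\<bar> + 1))"
        then have "s - a < \<epsilon> / (\<bar>K\<bar> + 1)" by linarith
        then have "(s - a) * (\<bar>K\<bar> + 1) < \<epsilon>" using K1 by (simp only: pos_less_divide_eq)
        then have "\<bar>K\<bar> + 1 < \<epsilon> / (s - a)" using s by (simp add: pos_less_divide_eq mult.commute)
        then show "0 \<le> z s" using K[of s] s by (simp add: z_def)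
      qed
    qed (use that in auto)
    then show ?thesis by (simp add: z_def)
  qed
  have "0 \<le> v t + e" if "0 < e" for e
    using penalized[of "e * (t - a)" t] that t by simp
  then show ?thesis by (rule field_le_epsilon)
qed

text \<open>Comparison with \<open>y\<close>, the solution of \<open>\<^sup>CD\<^sup>\<alpha>\<^sub>b\<^sub>- y = m\<close>, \<open>y b = 0\<close>.\<close>
lemma right_caputo_upper_bound:
  fixes w w' :: "real \<Rightarrow> real" and a b \<alpha> m t :: real
  assumes a0: "0 < \<alpha>" and a1: "\<alpha> < 1"
    and wc: "continuous_on {a..b} w" and wb: "w b = 0"
    and wd: "\<And>t. t \<in> {a<..<b} \<Longrightarrow> (w has_real_derivative w' t) (at t)"
    and wi: "\<And>t. t \<in> {a<..<b} \<Longrightarrow> (\<lambda>s. (s - t) powr (- \<alpha>) * w' s) integrable_on {t..b}"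
    and wm: "\<And>t. t \<in> {a<..<b} \<Longrightarrow>
               - integral {t..b} (\<lambda>s. (s - t) powr (- \<alpha>) * w' s) / Gamma (1 - \<alpha>) \<le> m"
    and t: "t \<in> {a<..<b}"
  shows "w t \<le> m * (b - t) powr \<alpha> / Gamma (\<alpha> + 1)"
proof -
  define y where "y = (\<lambda>s. m / Gamma (\<alpha> + 1) * (b - s) powr \<alpha>)"
  define y' where "y' = (\<lambda>s. - m / Gamma \<alpha> * (b - s) powr (\<alpha> - 1))"
  have G1: "0 < Gamma (1 - \<alpha>)" using a1 by (intro Gamma_real_pos) auto
  have Ga: "Gamma (\<alpha> + 1) = \<alpha> * Gamma \<alpha>" and "0 < Gamma \<alpha>"
    using a0 by (auto intro!: Gamma_plus1 Gamma_real_pos elim!: nonpos_Ints_cases)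
  then have Gp1: "0 < Gamma (\<alpha> + 1)" using a0 by simp
  have yc: "continuous_on {a..b} y"
    unfolding y_def using a0
    by (intro continuous_on_mult continuous_on_const continuous_on_powr' continuous_intros) auto
  have yd: "(y has_real_derivative y' s) (at s)" if "s < b" for s
  proof -
    have "(y has_real_derivative m / Gamma (\<alpha> + 1) * (\<alpha> * (b - s) powr (\<alpha> - 1) * (0 - 1))) (at s)"
      unfolding y_def using that Gp1 by (auto intro!: derivative_eq_intros)
    then show ?thesis using \<open>0 < Gamma \<alpha>\<close> a0 by (simp add: y'_def Ga)
  qed
  have "0 \<le> y t - w t"
  proof (rule right_caputo_nonneg[OF a0 a1, of a b "\<lambda>s. y s - w s" "\<lambda>s. y' s - w' s"])
    show "continuous_on {a..b} (\<lambda>s. y s - w s)" by (intro continuous_intros yc wc)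
    show "0 \<le> y b - w b" by (simp add: y_def wb)
    show "((\<lambda>s. y s - w s) has_real_derivative y' s - w' s) (at s)" if "s \<in> {a<..<b}" for s
      using that by (auto intro!: derivative_eq_intros yd wd)
    fix r assume r: "r \<in> {a<..<b}"
    have "((\<lambda>s. (s - r) powr (- \<alpha>) * y' s) has_integral - m * Gamma (1 - \<alpha>)) {r..b}"
      using has_integral_mult_right[OF has_integral_right_caputo_of_power[of r b \<alpha>], of "- m / Gamma \<alpha>"]
        r a0 a1 \<open>0 < Gamma \<alpha>\<close> by (simp add: y'_def mult_ac)
    from has_integral_diff[OF this integrable_integral[OF wi[OF r]]]
    have yw: "((\<lambda>s. (s - r) powr (- \<alpha>) * (y' s - w' s)) has_integral
        - m * Gamma (1 - \<alpha>) - integral {r..b} (\<lambda>s. (s - r) powr (- \<alpha>) * w' s)) {r..b}"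
      by (simp add: right_diff_distrib)
    then show "(\<lambda>s. (s - r) powr (- \<alpha>) * (y' s - w' s)) integrable_on {r..b}" by blast
    have "- integral {r..b} (\<lambda>s. (s - r) powr (- \<alpha>) * w' s) \<le> m * Gamma (1 - \<alpha>)"
      using wm[OF r] G1 by (simp add: field_simps)
    then show "integral {r..b} (\<lambda>s. (s - r) powr (- \<alpha>) * (y' s - w' s)) \<le> 0"
      using integral_unique[OF yw] by linarith
  qed (use t in auto)
  then show ?thesis by (simp add: y_def)
qed

lemma right_caputo_abs_bound:
  fixes w w' :: "real \<Rightarrow> real" and a b \<alpha> m t :: real
  assumes a0: "0 < \<alpha>" and a1: "\<alpha> \<le> 1"
    and wc: "continuous_on {a..b} w" and wb: "w b = 0"
    and wd: "\<And>t. t \<in> {a<..<b} \<Longrightarrow> (w has_real_derivative w' t) (at t)"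
    and wi: "\<And>t. \<alpha> < 1 \<Longrightarrow> t \<in> {a<..<b} \<Longrightarrow>
               (\<lambda>s. (s - t) powr (- \<alpha>) * w' s) integrable_on {t..b}"
    and wm: "\<And>t. t \<in> {a<..<b} \<Longrightarrow> \<bar>caputo_right \<alpha> b w' t\<bar> \<le> m"
    and t: "t \<in> {a<..<b}"
  shows "\<bar>w t\<bar> \<le> m * (b - t) powr \<alpha> / Gamma (\<alpha> + 1)"
proof (cases "\<alpha> = 1")
  case False
  then have a1': "\<alpha> < 1" using a1 by simp
  have cap: "caputo_right \<alpha> b w' s = - integral {s..b} (\<lambda>x. (x - s) powr (- \<alpha>) * w' x) / Gamma (1 - \<alpha>)"
    for s using False by (simp add: caputo_right_def RL_int_right_def)
  have "w t \<le> m * (b - t) powr \<alpha> / Gamma (\<alpha> + 1)"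
  proof (rule right_caputo_upper_bound[OF a0 a1' wc wb wd wi[OF a1'] _ t])
    show "- integral {s..b} (\<lambda>x. (x - s) powr (- \<alpha>) * w' x) / Gamma (1 - \<alpha>) \<le> m"
      if "s \<in> {a<..<b}" for s using wm[OF that] unfolding cap abs_le_iff by simp
  qed
  moreover have "- w t \<le> m * (b - t) powr \<alpha> / Gamma (\<alpha> + 1)"
  proof (rule right_caputo_upper_bound[OF a0 a1', of a b "\<lambda>s. - w s" "\<lambda>s. - w' s"])
    show "continuous_on {a..b} (\<lambda>s. - w s)" by (intro continuous_intros wc)
    show "((\<lambda>s. - w s) has_real_derivative - w' s) (at s)" if "s \<in> {a<..<b}" for s
      using wd[OF that] by (rule DERIV_minus)
    show "(\<lambda>x. (x - s) powr (- \<alpha>) * - w' x) integrable_on {s..b}" if "s \<in> {a<..<b}" for s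
      using integrable_neg[OF wi[OF a1' that]] by simp
    show "- integral {s..b} (\<lambda>x. (x - s) powr (- \<alpha>) * - w' x) / Gamma (1 - \<alpha>) \<le> m"
      if "s \<in> {a<..<b}" for s
    proof -
      have "integral {s..b} (\<lambda>x. (x - s) powr (- \<alpha>) * - w' x) = - integral {s..b} (\<lambda>x. (x - s) powr (- \<alpha>) * w' x)"
        using integral_neg[of "{s..b}" "\<lambda>x. (x - s) powr (- \<alpha>) * w' x"] by simp
      then show ?thesis using wm[OF that] unfolding cap abs_le_iff by simp
    qed
  qed (use wb t in auto)
  ultimately show ?thesis by (simp add: abs_le_iff)
next
  case True
  have w'm: "\<bar>w' s\<bar> \<le> m" if "s \<in> {a<..<b}" for s
    using wm[OF that] True by (simp add: caputo_right_def)
  have "\<sigma> * w t + m * t \<le> \<sigma> * w b + m * b" if "\<sigma> = 1 \<or> \<sigma> = -1" for \<sigma>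
  proof (rule DERIV_nonneg_imp_increasing_open[of t b "\<lambda>s. \<sigma> * w s + m * s"])
    fix s assume "t < s" "s < b"
    then show "\<exists>y. ((\<lambda>s. \<sigma> * w s + m * s) has_real_derivative y) (at s) \<and> 0 \<le> y"
      using wd[of s] w'm[of s] t that
      by (intro exI[of _ "\<sigma> * w' s + m"]) (auto intro!: derivative_eq_intros simp: abs_le_iff)
  qed (use t in \<open>auto intro!: continuous_intros continuous_on_subset[OF wc]\<close>)
  from this[of 1] this[of "-1"] have "\<bar>w t\<bar> \<le> m * (b - t)"
    using wb by (simp add: abs_le_iff algebra_simps)
  moreover have "Gamma (2::real) = 1" by (simp add: Gamma_numeral)
  ultimately show ?thesis using True t by simp
qed

section \<open>A positivity principle for the left Riemann--Liouville integral\<close>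

lemma has_integral_power_sub:
  fixes a t :: real and n :: nat
  assumes "a \<le> t"
  shows "((\<lambda>s. (s - a) ^ n) has_integral (t - a) ^ Suc n / (real n + 1)) {a..t}"
proof -
  have "((\<lambda>s. (s - a) ^ n) has_integral (t - a) ^ Suc n / Suc n - (a - a) ^ Suc n / Suc n) {a..t}"
  proof (rule fundamental_theorem_of_calculus)
    fix s assume "s \<in> {a..t}"
    have "((\<lambda>s. (s - a) ^ Suc n / Suc n) has_real_derivative Suc n * (s - a) ^ n * 1 / Suc n)
        (at s within {a..t})"
      by (intro derivative_eq_intros) auto
    then show "((\<lambda>s. (s - a) ^ Suc n / Suc n) has_vector_derivative (s - a) ^ n) (at s within {a..t})"
      by (simp add: has_real_derivative_iff_has_vector_derivative del: of_nat_Suc)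
  qed (use assms in auto)
  then show ?thesis by (simp add: add.commute)
qed

lemma has_integral_RL_kernel_monomial:
  fixes a r q :: real and n :: nat
  assumes "a \<le> r" and "0 < q"
  shows "((\<lambda>s. (r - s) powr (q - 1) * (s - a) ^ n) has_integral
           Beta (real n + 1) q * (r - a) powr (real n + q)) {a..r}"
proof -
  have "((\<lambda>s. (r - s) powr (q - 1) * (s - a) powr n) has_integral
      Beta (real n + 1) q * (r - a) powr (real n + q)) {a..r}"
    by (rule has_integral_RL_kernel_powr) (use assms in auto)
  then show ?thesis
    by (rule has_integral_spike_finite[of "{a}", rotated 2]) (auto simp: powr_realpow)
qed

lemma Beta_mult_Beta_shift:
  fixes \<beta> :: real and n :: nat
  assumes "0 < \<beta>" and "\<beta> < 1"
  shows "Beta (real n + 1) (1 - \<beta>) * Beta (real n + 2 - \<beta>) \<beta> = Beta \<beta> (1 - \<beta>) / (real n + 1)"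
proof -
  define X where "X = Gamma (real n + 2 - \<beta>)"
  define Y where "Y = Gamma (real n + 1)"
  have "X \<noteq> 0" "Y \<noteq> 0"
    unfolding X_def Y_def using assms by (auto intro!: less_imp_neq[symmetric] Gamma_real_pos)
  have "Gamma (real n + 1 + 1) = (real n + 1) * Gamma (real n + 1)"
    by (rule Gamma_plus1) (auto elim!: nonpos_Ints_cases)
  then have "Gamma (real n + 2) = (real n + 1) * Y"
    by (simp add: add.assoc Y_def)
  moreover have h: "real n + 1 + (1 - \<beta>) = real n + 2 - \<beta>" "real n + 2 - \<beta> + \<beta> = real n + 2"
    "\<beta> + (1 - \<beta>) = 1"
    by simp_all
  ultimately have "Beta (real n + 1) (1 - \<beta>) * Beta (real n + 2 - \<beta>) \<beta>
      = (Y * Gamma (1 - \<beta>) / X) * (X * Gamma \<beta> / ((real n + 1) * Y))"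
    unfolding Beta_def h X_def[symmetric] Y_def[symmetric] by simp
  also have "\<dots> = Beta \<beta> (1 - \<beta>) / (real n + 1)"
    using \<open>X \<noteq> 0\<close> \<open>Y \<noteq> 0\<close> by (simp add: Beta_def divide_simps)
  finally show ?thesis .
qed

lemma has_integral_RL_kernel_composition_monomial:
  fixes a t \<beta> :: real and n :: nat
  assumes "a < t" and "0 < \<beta>" and "\<beta> < 1"
  shows "((\<lambda>r. (t - r) powr (\<beta> - 1) * (Beta (real n + 1) (1 - \<beta>) * (r - a) powr (real n + (1 - \<beta>))))
           has_integral Beta \<beta> (1 - \<beta>) * ((t - a) ^ Suc n / (real n + 1))) {a..t}"
proof -
  have "((\<lambda>r. (t - r) powr (\<beta> - 1) * (r - a) powr (real n + (1 - \<beta>))) has_integral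
      Beta (real n + (1 - \<beta>) + 1) \<beta> * (t - a) powr (real n + (1 - \<beta>) + \<beta>)) {a..t}"
    by (rule has_integral_RL_kernel_powr) (use assms in auto)
  moreover have "real n + (1 - \<beta>) + 1 = real n + 2 - \<beta>" by simp
  moreover have "(t - a) powr (real n + (1 - \<beta>) + \<beta>) = (t - a) ^ Suc n"
  proof -
    have "real n + (1 - \<beta>) + \<beta> = real (Suc n)" by simp
    then show ?thesis by (simp only:) (rule powr_realpow, use assms in simp)
  qed
  ultimately have "((\<lambda>r. (t - r) powr (\<beta> - 1) * (r - a) powr (real n + (1 - \<beta>))) has_integral
      Beta (real n + 2 - \<beta>) \<beta> * (t - a) ^ Suc n) {a..t}"
    by (simp only:)
  from has_integral_mult_right[OF this, of "Beta (real n + 1) (1 - \<beta>)"]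
  show ?thesis
    using Beta_mult_Beta_shift[OF assms(2,3), of n] by (simp add: mult_ac)
qed

lemma RL_kernel_composition_polynomial:
  fixes g :: "real \<Rightarrow> real" and a t \<beta> :: real
  assumes g: "real_polynomial_function g" and at: "a < t" and b0: "0 < \<beta>" and b1: "\<beta> < 1"
  obtains P where "continuous_on {a..t} P"
    and "\<And>r. r \<in> {a..t} \<Longrightarrow> ((\<lambda>s. (r - s) powr (- \<beta>) * g s) has_integral P r) {a..r}"
    and "((\<lambda>r. (t - r) powr (\<beta> - 1) * P r) has_integral Beta \<beta> (1 - \<beta>) * integral {a..t} g) {a..t}"
proof -
  have "real_polynomial_function (g \<circ> (\<lambda>x. x + a))"
    using g by (intro real_polynomial_function_compose) auto
  then obtain c N where cN: "g \<circ> (\<lambda>x. x + a) = (\<lambda>x. \<Sum>i\<le>N. c i * x ^ i)"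
    unfolding real_polynomial_function_iff_sum by blast
  have g_eq: "g s = (\<Sum>i\<le>N. c i * (s - a) ^ i)" for s
    using fun_cong[OF cN, of "s - a"] by simp
  define P where "P = (\<lambda>r. \<Sum>i\<le>N. c i * (Beta (real i + 1) (1 - \<beta>) * (r - a) powr (real i + (1 - \<beta>))))"
  show thesis
  proof (rule that)
    show "continuous_on {a..t} P"
      unfolding P_def using b1 by (intro continuous_intros continuous_on_powr') auto
    show "((\<lambda>s. (r - s) powr (- \<beta>) * g s) has_integral P r) {a..r}" if "r \<in> {a..t}" for r
    proof -
      have "((\<lambda>s. \<Sum>i\<le>N. c i * ((r - s) powr ((1 - \<beta>) - 1) * (s - a) ^ i)) has_integral P r) {a..r}"
        unfolding P_def using that b1
        by (intro has_integral_sum has_integral_mult_right has_integral_RL_kernel_monomial) auto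
      then show ?thesis by (simp add: g_eq sum_distrib_left mult_ac)
    qed
    have "(g has_integral (\<Sum>i\<le>N. c i * ((t - a) ^ Suc i / (real i + 1)))) {a..t}"
      unfolding g_eq[abs_def] using at
      by (intro has_integral_sum has_integral_mult_right has_integral_power_sub) auto
    moreover have "((\<lambda>r. \<Sum>i\<le>N. c i * ((t - r) powr (\<beta> - 1) *
          (Beta (real i + 1) (1 - \<beta>) * (r - a) powr (real i + (1 - \<beta>))))) has_integral
        (\<Sum>i\<le>N. c i * (Beta \<beta> (1 - \<beta>) * ((t - a) ^ Suc i / (real i + 1))))) {a..t}"
      using at b0 b1
      by (intro has_integral_sum has_integral_mult_right has_integral_RL_kernel_composition_monomial) auto
    ultimately show "((\<lambda>r. (t - r) powr (\<beta> - 1) * P r) has_integral Beta \<beta> (1 - \<beta>) * integral {a..t} g) {a..t}"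
      by (simp add: P_def integral_unique sum_distrib_left mult_ac)
  qed
qed

lemma abs_integral_RL_kernel_diff_le:
  fixes h1 h2 :: "real \<Rightarrow> real" and a r q \<epsilon> :: real
  assumes ar: "a \<le> r" and q: "0 < q"
    and h1: "continuous_on {a..r} h1" and h2: "continuous_on {a..r} h2"
    and h12: "\<And>s. s \<in> {a..r} \<Longrightarrow> \<bar>h1 s - h2 s\<bar> \<le> \<epsilon>"
  shows "\<bar>integral {a..r} (\<lambda>s. (r - s) powr (q - 1) * h1 s) - integral {a..r} (\<lambda>s. (r - s) powr (q - 1) * h2 s)\<bar>
         \<le> \<epsilon> * ((r - a) powr q / q)"
proof -
  have k: "((\<lambda>s. (r - s) powr (q - 1)) has_integral (r - a) powr q / q) {a..r}"
    using has_integral_powr_sub_upper[OF ar q] .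
  have "(\<lambda>s. h1 s * (r - s) powr (q - 1)) integrable_on {a..r}"
    and "(\<lambda>s. h2 s * (r - s) powr (q - 1)) integrable_on {a..r}"
    using k by (auto intro!: integrable_continuous_mult_nonneg h1 h2)
  then have "((\<lambda>s. h1 s * (r - s) powr (q - 1) - h2 s * (r - s) powr (q - 1)) has_integral
      integral {a..r} (\<lambda>s. (r - s) powr (q - 1) * h1 s) - integral {a..r} (\<lambda>s. (r - s) powr (q - 1) * h2 s))
      {a..r}"
    by (intro has_integral_diff) (auto simp: mult.commute)
  then have "integral {a..r} (\<lambda>s. (r - s) powr (q - 1) * h1 s) - integral {a..r} (\<lambda>s. (r - s) powr (q - 1) * h2 s)
      = integral {a..r} (\<lambda>s. (h1 s - h2 s) * (r - s) powr (q - 1))"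
    by (simp add: left_diff_distrib integral_unique)
  also have "\<bar>\<dots>\<bar> \<le> \<epsilon> * integral {a..r} (\<lambda>s. (r - s) powr (q - 1))"
    using h1 h2 h12 k by (intro abs_integral_continuous_mult_nonneg_le continuous_on_diff) auto
  finally show ?thesis using integral_unique[OF k] by simp
qed

lemma RL_kernel_composition_approx:
  fixes Z g :: "real \<Rightarrow> real" and a t \<beta> \<epsilon> :: real
  assumes at: "a < t" and b0: "0 < \<beta>" and b1: "\<beta> < 1"
    and Zc: "continuous_on {a..t} Z"
    and Pc: "continuous_on {a..t} (\<lambda>r. integral {a..r} (\<lambda>s. (r - s) powr (- \<beta>) * Z s))"
    and g: "real_polynomial_function g" and gZ: "\<And>x. x \<in> {a..t} \<Longrightarrow> \<bar>Z x - g x\<bar> \<le> \<epsilon>"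
  shows "\<bar>integral {a..t} (\<lambda>r. (t - r) powr (\<beta> - 1) * integral {a..r} (\<lambda>s. (r - s) powr (- \<beta>) * Z s))
            - Beta \<beta> (1 - \<beta>) * integral {a..t} Z\<bar>
         \<le> \<epsilon> * ((t - a) powr (1 - \<beta>) / (1 - \<beta>) * ((t - a) powr \<beta> / \<beta>) + Beta \<beta> (1 - \<beta>) * (t - a))"
proof -
  define PZ where "PZ = (\<lambda>r. integral {a..r} (\<lambda>s. (r - s) powr (- \<beta>) * Z s))"
  define L where "L = integral {a..t} (\<lambda>r. (t - r) powr (\<beta> - 1) * PZ r)"
  define B where "B = Beta \<beta> (1 - \<beta>)"
  define C where "C = (t - a) powr (1 - \<beta>) / (1 - \<beta>)"
  obtain P where Pc': "continuous_on {a..t} P"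
    and Pi: "\<And>r. r \<in> {a..t} \<Longrightarrow> ((\<lambda>s. (r - s) powr (- \<beta>) * g s) has_integral P r) {a..r}"
    and LP: "((\<lambda>r. (t - r) powr (\<beta> - 1) * P r) has_integral B * integral {a..t} g) {a..t}"
    unfolding B_def by (fact RL_kernel_composition_polynomial[OF g at b0 b1])
  have B0: "0 < B"
    unfolding B_def Beta_def using b0 b1 by (auto intro!: divide_pos_pos mult_pos_pos Gamma_real_pos)
  have gc: "continuous_on {a..t} g"
    by (intro continuous_at_imp_continuous_on ballI continuous_real_polymonial_function[OF g])
  have dP: "\<bar>PZ r - P r\<bar> \<le> \<epsilon> * C" if r: "r \<in> {a..t}" for r
  proof -
    have "\<bar>PZ r - P r\<bar> \<le> \<epsilon> * ((r - a) powr (1 - \<beta>) / (1 - \<beta>))"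
      using abs_integral_RL_kernel_diff_le[of a r "1 - \<beta>" Z g \<epsilon>] r b1 gZ integral_unique[OF Pi[OF r]]
        continuous_on_subset[OF Zc] continuous_on_subset[OF gc]
      by (simp add: PZ_def)
    also have "\<dots> \<le> \<epsilon> * C"
      unfolding C_def using gZ[of a] at r b1 by (intro mult_left_mono divide_right_mono powr_mono2) auto
    finally show ?thesis .
  qed
  have "\<bar>L - B * integral {a..t} g\<bar> \<le> \<epsilon> * C * ((t - a) powr \<beta> / \<beta>)"
    using abs_integral_RL_kernel_diff_le[of a t \<beta> PZ P "\<epsilon> * C"] at b0 Pc Pc' dP integral_unique[OF LP]
    by (simp add: L_def PZ_def)
  moreover have "\<bar>integral {a..t} g - integral {a..t} Z\<bar> \<le> \<epsilon> * (t - a)"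
  proof -
    have Zgc: "continuous_on {a..t} (\<lambda>s. Z s - g s)" by (intro continuous_on_diff Zc gc)
    have "integral {a..t} Z - integral {a..t} g = integral {a..t} (\<lambda>s. (Z s - g s) * 1)"
      using Zc gc by (simp add: integral_diff integrable_continuous_interval)
    moreover have "\<bar>integral {a..t} (\<lambda>s. (Z s - g s) * 1)\<bar> \<le> \<epsilon> * integral {a..t} (\<lambda>s. 1)"
      by (rule abs_integral_continuous_mult_nonneg_le[OF Zgc integrable_const_ivl _ gZ]) simp_all
    ultimately show ?thesis using at by (simp add: abs_minus_commute)
  qed
  moreover have "\<bar>L - B * integral {a..t} Z\<bar>
      \<le> \<bar>L - B * integral {a..t} g\<bar> + B * \<bar>integral {a..t} g - integral {a..t} Z\<bar>"
  proof -
    have "\<bar>L - B * integral {a..t} Z\<bar>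
        = \<bar>(L - B * integral {a..t} g) + B * (integral {a..t} g - integral {a..t} Z)\<bar>"
      by (rule arg_cong[where f = abs]) (simp add: algebra_simps)
    also have "\<dots> \<le> \<bar>L - B * integral {a..t} g\<bar> + \<bar>B * (integral {a..t} g - integral {a..t} Z)\<bar>"
      by (rule abs_triangle_ineq)
    finally show ?thesis using B0 by (simp add: abs_mult)
  qed
  ultimately have "\<bar>L - B * integral {a..t} Z\<bar> \<le> \<epsilon> * C * ((t - a) powr \<beta> / \<beta>) + B * (\<epsilon> * (t - a))"
    using B0 by (smt (verit) mult_left_mono)
  then show ?thesis by (simp add: L_def PZ_def B_def C_def algebra_simps)
qed

text \<open>The semigroup identity \<open>I\<^sup>\<beta> I\<^sup>1\<^sup>-\<^sup>\<beta> = I\<^sup>1\<close>: exact for polynomials by Beta integrals, then for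
  continuous \<open>Z\<close> by Weierstrass approximation.\<close>
lemma integral_RL_kernel_composition:
  fixes Z :: "real \<Rightarrow> real" and a t \<beta> :: real
  assumes at: "a < t" and b0: "0 < \<beta>" and b1: "\<beta> < 1"
    and Zc: "continuous_on {a..t} Z"
    and Pc: "continuous_on {a..t} (\<lambda>r. integral {a..r} (\<lambda>s. (r - s) powr (- \<beta>) * Z s))"
  shows "integral {a..t} (\<lambda>r. (t - r) powr (\<beta> - 1) * integral {a..r} (\<lambda>s. (r - s) powr (- \<beta>) * Z s))
         = Beta \<beta> (1 - \<beta>) * integral {a..t} Z"
proof -
  define D where "D = integral {a..t} (\<lambda>r. (t - r) powr (\<beta> - 1) * integral {a..r} (\<lambda>s. (r - s) powr (- \<beta>) * Z s))
    - Beta \<beta> (1 - \<beta>) * integral {a..t} Z"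
  define C where "C = (t - a) powr (1 - \<beta>) / (1 - \<beta>) * ((t - a) powr \<beta> / \<beta>) + Beta \<beta> (1 - \<beta>) * (t - a)"
  have D_le: "\<bar>D\<bar> \<le> \<epsilon> * C" if ep: "0 < \<epsilon>" for \<epsilon>
  proof -
    obtain g where "real_polynomial_function g" and "\<And>x. x \<in> {a..t} \<Longrightarrow> \<bar>Z x - g x\<bar> < \<epsilon>"
      using Stone_Weierstrass_real_polynomial_function[OF compact_Icc Zc ep] by blast
    then show ?thesis unfolding D_def C_def
      by (intro RL_kernel_composition_approx[OF at b0 b1 Zc Pc]) (auto intro: less_imp_le)
  qed
  have "0 < Beta \<beta> (1 - \<beta>)"
    unfolding Beta_def using b0 b1 by (auto intro!: divide_pos_pos mult_pos_pos Gamma_real_pos)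
  then have "0 \<le> C"
    unfolding C_def using at b0 b1 by (intro add_nonneg_nonneg mult_nonneg_nonneg divide_nonneg_nonneg) auto
  have "\<bar>D\<bar> \<le> 0 + e" if "0 < e" for e
  proof -
    have "\<bar>D\<bar> \<le> e / (C + 1) * C" using D_le[of "e / (C + 1)"] that \<open>0 \<le> C\<close> by simp
    also have "\<dots> \<le> e" using that \<open>0 \<le> C\<close> by (simp add: field_simps)
    finally show ?thesis by simp
  qed
  then have "D = 0" using field_le_epsilon[of "\<bar>D\<bar>" 0] by simp
  then show ?thesis by (simp add: D_def)
qed

lemma has_integral_RL_kernel_reflect:
  fixes a t \<beta> :: real and P :: "real \<Rightarrow> real"
  assumes at: "a \<le> t" and b0: "0 < \<beta>" and Pc: "continuous_on {a..t} P"
  shows "(\<lambda>x. x powr (\<beta> - 1) * P (t - x)) integrable_on {0..t - a}"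
    and "((\<lambda>r. (t - r) powr (\<beta> - 1) * P r) has_integral
           integral {0..t - a} (\<lambda>x. x powr (\<beta> - 1) * P (t - x))) {a..t}"
proof -
  have "continuous_on {0..t - a} (\<lambda>x. P (t - x))"
    by (rule continuous_on_compose2[OF Pc]) (auto intro!: continuous_intros)
  moreover have "(\<lambda>x. x powr (\<beta> - 1)) integrable_on {0..t - a}"
    using has_integral_powr_sub_lower[of 0 "t - a" \<beta>] at b0 by auto
  ultimately have "(\<lambda>x. P (t - x) * x powr (\<beta> - 1)) integrable_on {0..t - a}"
    by (rule integrable_continuous_mult_nonneg) simp
  then show int: "(\<lambda>x. x powr (\<beta> - 1) * P (t - x)) integrable_on {0..t - a}"
    by (simp add: mult.commute)
  define F where "F = (\<lambda>x. x powr (\<beta> - 1) * P (t - x))"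
  have "(F has_integral integral {0..t - a} F) (cbox 0 (t - a))"
    using int unfolding F_def by (simp add: has_integral_integral)
  from has_integral_affinity[OF this, of "-1" t]
  have "((\<lambda>x. F (- x + t)) has_integral integral {0..t - a} F) ((\<lambda>x. - x + t) ` cbox 0 (t - a))"
    by simp
  moreover have "(\<lambda>x. - x + t) ` cbox 0 (t - a) = {a..t}"
    using image_affinity_atLeastAtMost[of "-1" t 0 "t - a"] at by simp
  ultimately show "((\<lambda>r. (t - r) powr (\<beta> - 1) * P r) has_integral
           integral {0..t - a} (\<lambda>x. x powr (\<beta> - 1) * P (t - x))) {a..t}"
    by (simp add: F_def)
qed

lemma integral_RL_kernel_mono:
  fixes a t1 t2 \<beta> :: real and P :: "real \<Rightarrow> real"
  assumes at: "a \<le> t1" "t1 \<le> t2" and b0: "0 < \<beta>" and Pc: "continuous_on {a..t2} P"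
    and Pm: "\<And>x y. a \<le> x \<Longrightarrow> x \<le> y \<Longrightarrow> y \<le> t2 \<Longrightarrow> P x \<le> P y"
    and P0: "\<And>x. a \<le> x \<Longrightarrow> x \<le> t2 \<Longrightarrow> 0 \<le> P x"
  shows "integral {a..t1} (\<lambda>r. (t1 - r) powr (\<beta> - 1) * P r) \<le> integral {a..t2} (\<lambda>r. (t2 - r) powr (\<beta> - 1) * P r)"
proof -
  note r1 = has_integral_RL_kernel_reflect[OF at(1) b0 continuous_on_subset[OF Pc]]
  note r2 = has_integral_RL_kernel_reflect[OF order.trans[OF at] b0 Pc]
  have i2: "(\<lambda>x. x powr (\<beta> - 1) * P (t2 - x)) integrable_on {0..t1 - a}"
    by (rule integrable_subinterval_real[OF r2(1)]) (use at in auto)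
  have "integral {a..t1} (\<lambda>r. (t1 - r) powr (\<beta> - 1) * P r)
      = integral {0..t1 - a} (\<lambda>x. x powr (\<beta> - 1) * P (t1 - x))"
    using r1(2) at by (auto intro: integral_unique)
  also have "\<dots> \<le> integral {0..t1 - a} (\<lambda>x. x powr (\<beta> - 1) * P (t2 - x))"
    using at by (intro integral_le[OF r1(1) i2] mult_left_mono Pm) auto
  also have "\<dots> \<le> integral {0..t2 - a} (\<lambda>x. x powr (\<beta> - 1) * P (t2 - x))"
    using at r2(1) P0 by (intro integral_subset_le i2) auto
  also have "\<dots> = integral {a..t2} (\<lambda>r. (t2 - r) powr (\<beta> - 1) * P r)"
    using r2(2) by (rule integral_unique[symmetric])
  finally show ?thesis .
qed

lemma nonneg_if_integral_mono:
  fixes Z :: "real \<Rightarrow> real" and a b t :: real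
  assumes Zc: "continuous_on {a..b} Z"
    and mono: "\<And>t1 t2. a < t1 \<Longrightarrow> t1 \<le> t2 \<Longrightarrow> t2 \<le> b \<Longrightarrow> integral {a..t1} Z \<le> integral {a..t2} Z"
    and t: "t \<in> {a<..<b}"
  shows "0 \<le> Z t"
proof (rule ccontr)
  assume "\<not> 0 \<le> Z t"
  then have neg: "Z t < 0" by simp
  have "((\<lambda>x. integral {a..x} Z) has_real_derivative Z t) (at t)"
    using integral_has_real_derivative[OF Zc, of t] t by (simp add: at_within_Icc_at)
  then obtain d where "0 < d" and d: "\<And>h. 0 < h \<Longrightarrow> h < d \<Longrightarrow> integral {a..t + h} Z < integral {a..t} Z"
    using DERIV_neg_dec_right[OF _ neg] by blast
  define h where "h = min (d / 2) (b - t)"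
  have "0 < h" "h < d" "t + h \<le> b" using \<open>0 < d\<close> t by (auto simp: h_def min_def)
  then show False using d[of h] mono[of t "t + h"] t by auto
qed

lemma nonneg_if_RL_integral_mono:
  fixes Z P :: "real \<Rightarrow> real" and a b \<beta> t :: real
  assumes ab: "a < b" and b0: "0 < \<beta>" and b1: "\<beta> < 1"
    and Zc: "continuous_on {a..b} Z" and Pc: "continuous_on {a..b} P"
    and PZ: "\<And>r. r \<in> {a..b} \<Longrightarrow> integral {a..r} (\<lambda>s. (r - s) powr (- \<beta>) * Z s) = P r"
    and Pm: "\<And>x y. a \<le> x \<Longrightarrow> x \<le> y \<Longrightarrow> y \<le> b \<Longrightarrow> P x \<le> P y"
    and P0: "\<And>x. a \<le> x \<Longrightarrow> x \<le> b \<Longrightarrow> 0 \<le> P x"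
    and t: "t \<in> {a..b}"
  shows "0 \<le> Z t"
proof -
  have B0: "0 < Beta \<beta> (1 - \<beta>)"
    unfolding Beta_def using b0 b1 by (auto intro!: divide_pos_pos mult_pos_pos Gamma_real_pos)
  have comp: "integral {a..r} (\<lambda>x. (r - x) powr (\<beta> - 1) * P x) = Beta \<beta> (1 - \<beta>) * integral {a..r} Z"
    if r: "a < r" "r \<le> b" for r
  proof -
    have "integral {a..r} (\<lambda>x. (r - x) powr (\<beta> - 1) * P x)
        = integral {a..r} (\<lambda>x. (r - x) powr (\<beta> - 1) * integral {a..x} (\<lambda>s. (x - s) powr (- \<beta>) * Z s))"
      using r by (intro integral_cong) (simp add: PZ)
    also have "\<dots> = Beta \<beta> (1 - \<beta>) * integral {a..r} Z"
    proof (rule integral_RL_kernel_composition[OF r(1) b0 b1])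
      show "continuous_on {a..r} Z" using r by (intro continuous_on_subset[OF Zc]) auto
      show "continuous_on {a..r} (\<lambda>x. integral {a..x} (\<lambda>s. (x - s) powr (- \<beta>) * Z s))"
        using r by (intro continuous_on_eq[OF continuous_on_subset[OF Pc]]) (auto simp: PZ)
    qed
    finally show ?thesis .
  qed
  have "0 \<le> Z s" if "s \<in> {a<..<b}" for s
  proof (rule nonneg_if_integral_mono[OF Zc _ that])
    fix t1 t2 assume t12: "a < t1" "t1 \<le> t2" "t2 \<le> b"
    have "a < t2" using t12 by simp
    have "Beta \<beta> (1 - \<beta>) * integral {a..t1} Z \<le> Beta \<beta> (1 - \<beta>) * integral {a..t2} Z"
      unfolding comp[OF t12(1) order.trans[OF t12(2,3)], symmetric] comp[OF \<open>a < t2\<close> t12(3), symmetric]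
      using t12 by (intro integral_RL_kernel_mono[OF _ _ b0 continuous_on_subset[OF Pc]] Pm P0) auto
    then show "integral {a..t1} Z \<le> integral {a..t2} Z" using B0 by simp
  qed
  then show ?thesis
    using continuous_ge_on_closure[of "{a<..<b}" Z t 0] Zc t ab by simp
qed

text \<open>Since \<open>\<integral>\<^sub>a\<^sup>t (t - s)\<^sup>-\<^sup>\<beta> Y s ds = K (t - a)\<close>, the same integral of \<open>Y - u\<close> has
  derivative \<open>K - v \<ge> 0\<close> and the positivity principle applies.\<close>
lemma left_RL_upper_bound:
  fixes u v :: "real \<Rightarrow> real" and a b \<beta> K t :: real
  assumes ab: "a < b" and b0: "0 < \<beta>" and b1: "\<beta> < 1"
    and uc: "continuous_on {a..b} u"
    and vd: "\<And>t. t \<in> {a..b} \<Longrightarrow>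
      ((\<lambda>t. integral {a..t} (\<lambda>s. (t - s) powr (- \<beta>) * u s)) has_real_derivative v t) (at t within {a..b})"
    and vK: "\<And>t. t \<in> {a<..<b} \<Longrightarrow> v t \<le> K"
    and t: "t \<in> {a..b}"
  shows "u t \<le> K / Beta (\<beta> + 1) (1 - \<beta>) * (t - a) powr \<beta>"
proof -
  define B where "B = Beta (\<beta> + 1) (1 - \<beta>)"
  define V where "V = (\<lambda>t. integral {a..t} (\<lambda>s. (t - s) powr (- \<beta>) * u s))"
  define Y where "Y = (\<lambda>s. K / B * (s - a) powr \<beta>)"
  define P where "P = (\<lambda>r. K * (r - a) - V r)"
  have "0 < B"
    unfolding B_def Beta_def using b0 b1 by (auto intro!: divide_pos_pos mult_pos_pos Gamma_real_pos)
  have Yc: "continuous_on {a..b} Y"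
    unfolding Y_def using b0 by (intro continuous_intros continuous_on_powr') auto
  have Yint: "((\<lambda>s. (r - s) powr (- \<beta>) * Y s) has_integral K * (r - a)) {a..r}" if r: "r \<in> {a..b}" for r
  proof -
    have "((\<lambda>s. (r - s) powr ((1 - \<beta>) - 1) * (s - a) powr \<beta>) has_integral
        B * (r - a) powr (\<beta> + (1 - \<beta>))) {a..r}"
      unfolding B_def using r b0 b1 by (intro has_integral_RL_kernel_powr) auto
    from has_integral_mult_right[OF this, of "K / B"]
    show ?thesis using \<open>0 < B\<close> r by (simp add: Y_def mult_ac)
  qed
  have uint: "(\<lambda>s. (r - s) powr (- \<beta>) * u s) integrable_on {a..r}" if r: "r \<in> {a..b}" for r
  proof -
    have "(\<lambda>s. u s * (r - s) powr (- \<beta>)) integrable_on {a..r}"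
      using r b1 has_integral_powr_sub_upper[of a r "1 - \<beta>"]
      by (intro integrable_continuous_mult_nonneg continuous_on_subset[OF uc]) auto
    then show ?thesis by (simp add: mult.commute)
  qed
  have PZ: "integral {a..r} (\<lambda>s. (r - s) powr (- \<beta>) * (Y s - u s)) = P r" if r: "r \<in> {a..b}" for r
    using has_integral_diff[OF Yint[OF r] integrable_integral[OF uint[OF r]]]
    by (simp add: P_def V_def right_diff_distrib integral_unique)
  have "continuous_on {a..b} V"
    unfolding continuous_on_eq_continuous_within using vd unfolding V_def by (blast intro: DERIV_continuous)
  then have Pc: "continuous_on {a..b} P"
    unfolding P_def by (intro continuous_intros)
  have Pm: "P x \<le> P y" if "a \<le> x" "x \<le> y" "y \<le> b" for x y
  proof (rule DERIV_nonneg_imp_increasing_open[OF \<open>x \<le> y\<close>])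
    fix s assume s: "x < s" "s < y"
    then have "(V has_real_derivative v s) (at s)"
      using vd[of s] that at_within_Icc_at[of a s b] unfolding V_def by auto
    then have "(P has_real_derivative K - v s) (at s)"
      unfolding P_def by (auto intro!: derivative_eq_intros)
    then show "\<exists>d. (P has_real_derivative d) (at s) \<and> 0 \<le> d"
      using vK[of s] s that by auto
  qed (rule continuous_on_subset[OF Pc], use that in auto)
  have P0: "0 \<le> P x" if "a \<le> x" "x \<le> b" for x
    using Pm[of a x] that by (simp add: P_def V_def)
  have "0 \<le> Y t - u t"
    by (rule nonneg_if_RL_integral_mono[OF ab b0 b1 _ Pc PZ Pm P0 t]) (intro continuous_intros Yc uc)
  then show ?thesis by (simp add: Y_def B_def)
qed

lemma left_RL_abs_bound:
  fixes u w :: "real \<Rightarrow> real" and a b \<beta> M t :: real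
  assumes ab: "a < b" and b0: "0 < \<beta>" and b1: "\<beta> \<le> 1"
    and uc: "continuous_on {a..b} u" and ua: "u a = 0"
    and ud: "has_RL_deriv_left \<beta> a u w {a..b}"
    and wM: "\<And>t. t \<in> {a<..<b} \<Longrightarrow> \<bar>w t\<bar> \<le> M"
    and t: "t \<in> {a..b}"
  shows "\<bar>u t\<bar> \<le> M * (t - a) powr \<beta> / Gamma (\<beta> + 1)"
proof (cases "\<beta> = 1")
  case False
  then have b1': "\<beta> < 1" using b1 by simp
  define G where "G = Gamma (1 - \<beta>)"
  have "0 < G" unfolding G_def using b1' by (intro Gamma_real_pos) auto
  have Vd: "((\<lambda>t. integral {a..t} (\<lambda>s. (t - s) powr (- \<beta>) * u s)) has_real_derivative G * w s)
      (at s within {a..b})" if "s \<in> {a..b}" for s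
  proof -
    have "((\<lambda>t. integral {a..t} (\<lambda>s. (t - s) powr (- \<beta>) * u s) / G) has_real_derivative w s)
        (at s within {a..b})"
    proof -
      have "RL_pre_left \<beta> a u = (\<lambda>t. integral {a..t} (\<lambda>s. (t - s) powr (- \<beta>) * u s) / G)"
        using False by (auto simp: RL_pre_left_def RL_int_left_def G_def)
      then show ?thesis using ud that unfolding has_RL_deriv_left_def by simp
    qed
    from DERIV_cmult[OF this, of G] show ?thesis using \<open>0 < G\<close> by simp
  qed
  have "Beta (\<beta> + 1) (1 - \<beta>) = Gamma (\<beta> + 1) * G"
    by (simp add: Beta_def G_def Gamma_numeral)
  then have const: "G * M / Beta (\<beta> + 1) (1 - \<beta>) = M / Gamma (\<beta> + 1)"
    using \<open>0 < G\<close> by simp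
  have "u t \<le> G * M / Beta (\<beta> + 1) (1 - \<beta>) * (t - a) powr \<beta>"
    using wM \<open>0 < G\<close>
    by (intro left_RL_upper_bound[OF ab b0 b1' uc Vd _ t]) (auto simp: abs_le_iff intro!: mult_left_mono)
  moreover have "- u t \<le> G * M / Beta (\<beta> + 1) (1 - \<beta>) * (t - a) powr \<beta>"
  proof (rule left_RL_upper_bound[OF ab b0 b1', of "\<lambda>s. - u s" "\<lambda>s. - (G * w s)"])
    show "continuous_on {a..b} (\<lambda>s. - u s)" by (intro continuous_intros uc)
    show "((\<lambda>x. integral {a..x} (\<lambda>s. (x - s) powr (- \<beta>) * - u s)) has_real_derivative - (G * w s))
        (at s within {a..b})" if "s \<in> {a..b}" for s
      using DERIV_minus[OF Vd[OF that]] by (simp add: integral_neg)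
    show "- (G * w s) \<le> G * M" if "s \<in> {a<..<b}" for s
      using wM[OF that] \<open>0 < G\<close> mult_left_mono[of "- w s" M G] by (simp add: abs_le_iff)
  qed (use t in auto)
  ultimately show ?thesis unfolding const by (simp add: abs_le_iff)
next
  case True
  have ud': "(u has_real_derivative w s) (at s)" if "s \<in> {a<..<b}" for s
  proof -
    have "(u has_real_derivative w s) (at s within {a..b})"
      using ud that True by (auto simp: has_RL_deriv_left_def RL_pre_left_def)
    then show ?thesis using that by (simp add: at_within_Icc_at)
  qed
  have "\<sigma> * u a + M * a \<le> \<sigma> * u t + M * t" if "\<sigma> = 1 \<or> \<sigma> = -1" for \<sigma>
  proof (rule DERIV_nonneg_imp_increasing_open[of a t "\<lambda>s. \<sigma> * u s + M * s"])
    fix s assume "a < s" "s < t"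
    then show "\<exists>y. ((\<lambda>s. \<sigma> * u s + M * s) has_real_derivative y) (at s) \<and> 0 \<le> y"
      using ud'[of s] wM[of s] t that
      by (intro exI[of _ "\<sigma> * w s + M"]) (auto intro!: derivative_eq_intros simp: abs_le_iff)
  qed (use t in \<open>auto intro!: continuous_intros continuous_on_subset[OF uc]\<close>)
  from this[of 1] this[of "-1"] have "\<bar>u t\<bar> \<le> M * (t - a)"
    using ua by (simp add: abs_le_iff algebra_simps)
  moreover have "Gamma (2::real) = 1" by (simp add: Gamma_numeral)
  ultimately show ?thesis using True t by simp
qed

theorem frac_eigenvalue_Gamma_bound:
  fixes a b \<alpha> \<beta> lam :: real
  assumes ab: "a < b" and a0: "0 < \<alpha>" and a1: "\<alpha> \<le> 1" and b0: "0 < \<beta>" and b1: "\<beta> \<le> 1"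
    and "frac_eigenvalue \<alpha> \<beta> a b lam"
  shows "Gamma (\<alpha> + 1) * Gamma (\<beta> + 1) \<le> \<bar>lam\<bar> * (b - a) powr (\<alpha> + \<beta>)"
proof -
  obtain u w w' where uc: "continuous_on {a..b} u" and unz: "\<exists>t\<in>{a..b}. u t \<noteq> 0"
    and ud: "has_RL_deriv_left \<beta> a u w {a..b}" and wc: "continuous_on {a..b} w"
    and wd: "\<forall>t\<in>{a<..<b}. (w has_real_derivative w' t) (at t)"
    and wi: "\<alpha> < 1 \<longrightarrow> (\<forall>t\<in>{a<..<b}. (\<lambda>s. (s - t) powr (- \<alpha>) * w' s) integrable_on {t..b})"
    and we: "\<forall>t\<in>{a<..<b}. caputo_right \<alpha> b w' t = lam * u t"
    and ua: "u a = 0" and wb: "w b = 0"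
    using assms(6) unfolding frac_eigenvalue_def by blast
  have "continuous_on {a..b} (\<lambda>t. \<bar>u t\<bar>)" by (intro continuous_intros uc)
  moreover have "{a..b} \<noteq> {}" using ab by simp
  ultimately obtain tm where tm: "tm \<in> {a..b}" and tmax: "\<And>t. t \<in> {a..b} \<Longrightarrow> \<bar>u t\<bar> \<le> \<bar>u tm\<bar>"
    using continuous_attains_sup[OF compact_Icc] by blast
  define U where "U = \<bar>u tm\<bar>"
  have "0 < U"
  proof -
    from unz obtain t0 where "t0 \<in> {a..b}" "0 < \<bar>u t0\<bar>" by auto
    then show ?thesis using tmax unfolding U_def by (meson order.strict_trans2)
  qed
  define M where "M = \<bar>lam\<bar> * U * (b - a) powr \<alpha> / Gamma (\<alpha> + 1)"
  have Gp: "0 < Gamma (\<alpha> + 1)" "0 < Gamma (\<beta> + 1)" using a0 b0 by (auto intro!: Gamma_real_pos)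
  have wm: "\<bar>caputo_right \<alpha> b w' t\<bar> \<le> \<bar>lam\<bar> * U" if "t \<in> {a<..<b}" for t
    using we that tmax[of t] unfolding U_def by (simp add: abs_mult mult_left_mono)
  have "\<bar>w t\<bar> \<le> M" if t: "t \<in> {a<..<b}" for t
  proof -
    have "\<bar>w t\<bar> \<le> \<bar>lam\<bar> * U * (b - t) powr \<alpha> / Gamma (\<alpha> + 1)"
      by (rule right_caputo_abs_bound[OF a0 a1 wc wb _ _ wm t]) (use wd wi in auto)
    also have "\<dots> \<le> M"
      unfolding M_def using t Gp a0 \<open>0 < U\<close> by (intro divide_right_mono mult_left_mono powr_mono2) auto
    finally show ?thesis .
  qed
  then have "U \<le> M * (tm - a) powr \<beta> / Gamma (\<beta> + 1)"
    unfolding U_def by (rule left_RL_abs_bound[OF ab b0 b1 uc ua ud _ tm])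
  also have "\<dots> \<le> M * (b - a) powr \<beta> / Gamma (\<beta> + 1)"
    unfolding M_def using tm Gp b0 \<open>0 < U\<close> by (intro divide_right_mono mult_left_mono powr_mono2) auto
  also have "\<dots> = U * (\<bar>lam\<bar> * (b - a) powr (\<alpha> + \<beta>) / (Gamma (\<alpha> + 1) * Gamma (\<beta> + 1)))"
    by (simp add: M_def powr_add)
  finally have "U * 1 \<le> U * (\<bar>lam\<bar> * (b - a) powr (\<alpha> + \<beta>) / (Gamma (\<alpha> + 1) * Gamma (\<beta> + 1)))"
    by simp
  then have "1 \<le> \<bar>lam\<bar> * (b - a) powr (\<alpha> + \<beta>) / (Gamma (\<alpha> + 1) * Gamma (\<beta> + 1))"
    using \<open>0 < U\<close> by (simp only: mult_le_cancel_left_pos)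
  then show ?thesis using Gp by (simp add: pos_le_divide_eq)
qed

theorem corollary6:
  fixes a b \<alpha> \<beta> lam :: real
  assumes "a < b"
    and "0 < \<alpha>" "\<alpha> \<le> 1" "0 < \<beta>" "\<beta> \<le> 1"
    and "1 < \<alpha> + \<beta>" "\<alpha> + \<beta> \<le> 2"
    and "frac_eigenvalue \<alpha> \<beta> a b lam"
  shows "\<bar>lam\<bar> \<ge> (\<alpha> + \<beta> - 1) * Gamma \<alpha> * Gamma \<beta> / (b - a) powr (\<alpha> + \<beta>)"
proof -
  have "0 < Gamma \<alpha>" "0 < Gamma \<beta>" using assms by (auto intro!: Gamma_real_pos)
  then have "0 \<le> Gamma \<alpha> * Gamma \<beta>" by simp
  moreover have "\<alpha> + \<beta> - 1 \<le> \<alpha> * \<beta>"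
    using mult_nonneg_nonneg[of "1 - \<alpha>" "1 - \<beta>"] assms by (simp add: algebra_simps)
  ultimately have "(\<alpha> + \<beta> - 1) * (Gamma \<alpha> * Gamma \<beta>) \<le> (\<alpha> * \<beta>) * (Gamma \<alpha> * Gamma \<beta>)"
    by (rule mult_right_mono[rotated])
  also have "\<dots> = Gamma (\<alpha> + 1) * Gamma (\<beta> + 1)"
    using assms Gamma_plus1[of \<alpha>] Gamma_plus1[of \<beta>] by (simp add: nonpos_Ints_def)
  also have "\<dots> \<le> \<bar>lam\<bar> * (b - a) powr (\<alpha> + \<beta>)"
    using assms by (intro frac_eigenvalue_Gamma_bound) auto
  finally show ?thesis
    using \<open>a < b\<close> by (simp add: pos_divide_le_eq mult.assoc)
qed

end
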